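(* Let $P\subseteq\mathbb{R}^n$ be an $n$-dimensional rational polytope and let $s\ge 0$. (1) Each facet of $P^{(s)}$ is of the form $F^{(s)}:=\{x\in P^{(s)}: d_F(x)=s\}$ for some facet $F$ of $P$. (2) Assume $P^{(s)}$ has dimension $n$ and let $x\in P^{(s)}$. Then $d_{P^{(s)}}(x)=d_P(x)-s$. Moreover, if $x\in\mathrm{int}(P^{(s)})$ and $d_P(x)=d_F(x)$ for a facet $F$ of $P$, then $F^{(s)}$ is a facet of $P^{(s)}$ and $d_{P^{(s)}}(x)=d_{F^{(s)}}(x)$. (3) Assume $P^{(s)}$ has dimension $n$ and let $r\ge 0$. Then $(P^{(s)})^{(r)}=P^{(s+r)}$. (4) For $r>0$ we have $r\,(P^{(s)})=(rP)^{(rs)}$.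
   Context: Any $n$-dimensional rational polytope $Q\subseteq\mathbb{R}^n$ has a unique irredundant description $Q=\{x:\langle a_i,x\rangle\ge b_i,\ i=1,\dots,m\}$ with primitive $a_i\in(\mathbb{Z}^n)^*$, $b_i\in\mathbb{Q}$, where each inequality defines a facet $F_i$ of $Q$. The lattice distance from $F_i$ is $d_{F_i}(x):=\langle a_i,x\rangle-b_i$, and $d_Q(x):=\min_i d_{F_i}(x)$. For $s\ge0$, the adjoint polytope is $Q^{(s)}:=\{x\in\mathbb{R}^n:d_Q(x)\ge s\}$. When $P^{(s)}$ is $n$-dimensional, $d_{P^{(s)}}$ is computed from its own irredundant facet description, and for a facet $F^{(s)}$ of $P^{(s)}$ coming from the facet $F=\{\langle a,x\rangle=b\}$ of $P$, $d_{F^{(s)}}(x)=\langle a,x\rangle-b-s$. *)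

theory Defs
  imports "HOL-Analysis.Analysis"
begin

definition rational_polytope :: "(real ^ 'n) set \<Rightarrow> bool" where
  "rational_polytope P \<longleftrightarrow>
     (\<exists>V. finite V \<and> P = convex hull V \<and> (\<forall>v\<in>V. \<forall>i. v $ i \<in> \<rat>))"

definition primitive_vec :: "real ^ 'n \<Rightarrow> bool" where
  "primitive_vec a \<longleftrightarrow> (\<forall>i. a $ i \<in> \<int>) \<and> a \<noteq> 0 \<and>
     (\<forall>k::int. k > 1 \<longrightarrow> \<not> (\<forall>i. a $ i / of_int k \<in> \<int>))"

definition facet_ineq :: "(real ^ 'n) set \<Rightarrow> (real ^ 'n) set \<Rightarrow> real ^ 'n \<Rightarrow> real \<Rightarrow> bool" where
  "facet_ineq Q F a b \<longleftrightarrow> primitive_vec a \<and> (\<forall>x\<in>Q. b \<le> a \<bullet> x) \<and> F = {x\<in>Q. a \<bullet> x = b}"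

text \<open>Lattice distance \<open>d_F(x) = <a,x> - b\<close> from the facet F of Q (unique primitive description).\<close>
definition facet_dist :: "(real ^ 'n) set \<Rightarrow> (real ^ 'n) set \<Rightarrow> real ^ 'n \<Rightarrow> real" where
  "facet_dist Q F x = (let (a, b) = (THE (a, b). facet_ineq Q F a b) in a \<bullet> x - b)"

definition lat_dist :: "(real ^ 'n) set \<Rightarrow> real ^ 'n \<Rightarrow> real" where
  "lat_dist Q x = Min ((\<lambda>F. facet_dist Q F x) ` {F. F facet_of Q})"

definition adjoint_poly :: "(real ^ 'n) set \<Rightarrow> real \<Rightarrow> (real ^ 'n) set" where
  "adjoint_poly Q s = {x. s \<le> lat_dist Q x}"

definition adj_facet :: "(real ^ 'n) set \<Rightarrow> (real ^ 'n) set \<Rightarrow> real \<Rightarrow> (real ^ 'n) set" where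
  "adj_facet P F s = {x \<in> adjoint_poly P s. facet_dist P F x = s}"

end

theory Submission
  imports Defs
begin

text \<open>
  In a full-dimensional rational polytope every facet F has a unique primitive inequality, so
  d_F is a well-defined affine function and P^(s) is the intersection of the half-spaces
  d_F >= s. Hence every facet of P^(s) is some F^(s), with the same primitive normal and the
  offset shifted by s, so that d_F^(s) = d_F - s for the facets F that survive. The crux is that
  a facet G that does not survive never realises the minimum in d_P(x) for x in P^(s):
  otherwise, walking from a point of G towards x, one would enter P^(s), which is cut out by the
  surviving facets alone, while still at distance less than s from G. This gives
  d_P^(s) = d_P - s, and with it (P^(s))^(r) = P^(s+r). Scaling maps facets to facets and keeps
  primitive normals, which gives r P^(s) = (r P)^(r s).
\<close>

lemma primitive_vec_uminus: "primitive_vec (- a) \<longleftrightarrow> primitive_vec (a :: real^'n)"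
  unfolding primitive_vec_def by (simp add: minus_divide_left[symmetric])

lemma rational_vec_scale_integral:
  fixes c :: "real^'n"
  assumes "\<forall>i. c$i \<in> \<rat>"
  shows "\<exists>\<mu>>0. \<forall>i. (\<mu> *\<^sub>R c)$i \<in> \<int>"
proof -
  have "\<exists>q::int. q > 0 \<and> of_int q * c$i \<in> \<int>" for i
  proof -
    obtain p q where "q > 0" "c$i = of_int p / of_int q"
      using Rats_cases'[OF assms[rule_format, of i]] by metis
    then show ?thesis by (intro exI[of _ q]) auto
  qed
  then obtain q where q: "\<And>i. q i > 0" "\<And>i. of_int (q i) * c$i \<in> \<int>" by metis
  define \<mu> where "\<mu> = (\<Prod>i\<in>UNIV. real_of_int (q i))"
  have "\<mu> * c$i \<in> \<int>" for i
  proof -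
    have "\<mu> = of_int (q i) * (\<Prod>j\<in>UNIV-{i}. real_of_int (q j))"
      unfolding \<mu>_def by (simp add: prod.remove)
    then have "\<mu> * c$i = (of_int (q i) * c$i) * (\<Prod>j\<in>UNIV-{i}. real_of_int (q j))"
      by simp
    also have "\<dots> \<in> \<int>" by (rule Ints_mult[OF q(2) Ints_prod]) auto
    finally show ?thesis .
  qed
  moreover have "\<mu> > 0" unfolding \<mu>_def using q(1) by (intro prod_pos) auto
  ultimately show ?thesis by auto
qed

lemma integral_vec_scale_primitive:
  fixes c :: "real^'n"
  assumes int: "\<forall>i. c$i \<in> \<int>" and "c \<noteq> 0"
  shows "\<exists>\<mu>>0. primitive_vec (\<mu> *\<^sub>R c)"
proof -
  define m where "m i = \<lfloor>c$i\<rfloor>" for i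
  have c_eq: "c$i = of_int (m i)" for i
    unfolding m_def using int by (metis Ints_cases floor_of_int)
  define g where "g = Gcd (range m)"
  obtain i0 where "c$i0 \<noteq> 0" using \<open>c \<noteq> 0\<close> by (metis vec_eq_iff zero_index)
  then have "g \<noteq> 0" unfolding g_def using c_eq by auto
  then have "g > 0" unfolding g_def using Gcd_int_greater_eq_0 by (simp add: less_le)
  have g_dvd: "g dvd m i" for i unfolding g_def by (rule Gcd_dvd) simp
  have "primitive_vec ((1 / of_int g) *\<^sub>R c)"
    unfolding primitive_vec_def
  proof (intro conjI allI impI)
    show "((1 / of_int g) *\<^sub>R c) $ i \<in> \<int>" for i
      using g_dvd[of i] \<open>g > 0\<close> by (auto simp: c_eq)
    show "(1 / of_int g) *\<^sub>R c \<noteq> 0" using \<open>c \<noteq> 0\<close> \<open>g > 0\<close> by simp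
    fix k :: int assume "k > 1"
    show "\<not> (\<forall>i. ((1 / of_int g) *\<^sub>R c) $ i / of_int k \<in> \<int>)"
    proof
      assume all: "\<forall>i. ((1 / of_int g) *\<^sub>R c) $ i / of_int k \<in> \<int>"
      have "g * k dvd m i" for i
      proof -
        obtain z where "of_int (m i) / (of_int g * of_int k) = (of_int z :: real)"
          using all[rule_format, of i] by (auto simp: c_eq elim!: Ints_cases)
        then have "m i = g * k * z" using \<open>g > 0\<close> \<open>k > 1\<close>
          by (simp add: field_simps) (metis of_int_eq_iff of_int_mult)
        then show ?thesis by simp
      qed
      then have "g * k dvd g" unfolding g_def by (intro Gcd_greatest) auto
      then have "g * k \<le> g * 1" using \<open>g > 0\<close> by (simp add: zdvd_imp_le)
      then show False using \<open>g > 0\<close> \<open>k > 1\<close> by simp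
    qed
  qed
  then show ?thesis using \<open>g > 0\<close> by (intro exI[of _ "1 / of_int g"]) auto
qed

lemma rational_vec_scale_primitive:
  fixes c :: "real^'n"
  assumes "\<forall>i. c$i \<in> \<rat>" and "c \<noteq> 0"
  shows "\<exists>\<mu>>0. primitive_vec (\<mu> *\<^sub>R c)"
proof -
  obtain \<mu> where "\<mu> > 0" "\<forall>i. (\<mu> *\<^sub>R c)$i \<in> \<int>"
    using rational_vec_scale_integral[OF assms(1)] by blast
  moreover from this obtain \<nu> where "\<nu> > 0" "primitive_vec (\<nu> *\<^sub>R \<mu> *\<^sub>R c)"
    using integral_vec_scale_primitive[of "\<mu> *\<^sub>R c"] \<open>c \<noteq> 0\<close> by auto
  ultimately show ?thesis by (intro exI[of _ "\<nu> * \<mu>"]) auto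
qed

lemma primitive_vec_scale_eq_1:
  fixes a :: "real^'n"
  assumes pa: "primitive_vec a" and pa': "primitive_vec (\<mu> *\<^sub>R a)" and "\<mu> > 0"
  shows "\<mu> = 1"
proof -
  have a_int: "\<And>i. a$i \<in> \<int>" and "a \<noteq> 0" using pa by (auto simp: primitive_vec_def)
  have a'_int: "\<And>i. \<mu> * a$i \<in> \<int>" using pa' by (auto simp: primitive_vec_def)
  obtain i0 where i0: "a$i0 \<noteq> 0" using \<open>a \<noteq> 0\<close> by (metis vec_eq_iff zero_index)
  have "\<mu> = (\<mu> * a$i0) / a$i0" using i0 by simp
  also have "\<dots> \<in> \<rat>" using a_int a'_int by (meson Ints_subset_Rats Rats_divide subsetD)
  finally obtain p q where pq: "q > 0" "coprime p q" "\<mu> = of_int p / of_int q" by (rule Rats_cases')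
  have "p > 0" using pq \<open>\<mu> > 0\<close> by (simp add: zero_less_divide_iff)
  define A where "A i = \<lfloor>a$i\<rfloor>" for i
  have A_eq: "a$i = of_int (A i)" for i unfolding A_def using a_int by (metis Ints_cases floor_of_int)
  have q_dvd: "q dvd A i" for i
  proof -
    obtain z where "\<mu> * a$i = of_int z" using a'_int[of i] by (auto elim!: Ints_cases)
    then have "q * z = p * A i"
      using pq A_eq[of i] by (simp add: field_simps) (metis of_int_eq_iff of_int_mult)
    then have "q dvd p * A i" by (metis dvd_triv_left)
    then show ?thesis using pq(2) by (simp add: coprime_commute coprime_dvd_mult_right_iff)
  qed
  have "\<forall>i. a$i / of_int q \<in> \<int>"
  proof
    fix i
    obtain k where "A i = q * k" using q_dvd[of i] by (rule dvdE)
    then show "a$i / of_int q \<in> \<int>" using A_eq[of i] pq(1) by simp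
  qed
  then have "q = 1" using pa pq(1) unfolding primitive_vec_def by (metis int_one_le_iff_zero_less order_le_less)
  then have "\<forall>i. (\<mu> *\<^sub>R a)$i / of_int p \<in> \<int>" using pq \<open>p > 0\<close> a_int by simp
  then have "p = 1" using pa' \<open>p > 0\<close> unfolding primitive_vec_def by (metis int_one_le_iff_zero_less order_le_less)
  then show ?thesis using pq \<open>q = 1\<close> by simp
qed

lemma det_in_Rats:
  fixes A :: "real^'n^'n"
  assumes "\<And>i j. A$i$j \<in> \<rat>"
  shows "det A \<in> \<rat>"
  unfolding det_def using assms by (intro Rats_sum Rats_prod Rats_mult Rats_of_int)

lemma det_replace_row_eq_inner:
  fixes g :: "'n \<Rightarrow> real^'n"
  shows "det ((\<chi> i. if i = k0 then x else g i) :: real^'n^'n)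
    = (\<chi> j. det ((\<chi> i. if i = k0 then axis j 1 else g i) :: real^'n^'n)) \<bullet> x"
proof -
  have "det ((\<chi> i. if i = k0 then x else g i) :: real^'n^'n)
      = det ((\<chi> i. if i = k0 then sum (\<lambda>j. (x$j) *s axis j 1) UNIV else g i) :: real^'n^'n)"
    unfolding basis_expansion ..
  also have "\<dots> = (\<Sum>j\<in>UNIV. det ((\<chi> i. if i = k0 then (x$j) *s axis j (1::real) else g i)::real^'n^'n))"
    by (rule det_linear_row_sum) simp
  also have "\<dots> = (\<Sum>j\<in>UNIV. x$j * det ((\<chi> i. if i = k0 then axis j 1 else g i) :: real^'n^'n))"
    by (simp add: det_row_mul)
  finally show ?thesis by (simp add: inner_vec_def mult.commute)
qed

text \<open>\<open>c\<close> is the cofactor vector: \<open>c \<bullet> x\<close> is the determinant of the matrix with rows \<open>B\<close> and \<open>x\<close>.\<close>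
lemma rational_orthogonal_vector_exists:
  fixes B :: "(real^'n) set"
  assumes indB: "independent B" and cardB: "card B = CARD('n) - 1"
    and rat: "\<forall>v\<in>B. \<forall>i. v$i \<in> \<rat>"
  shows "\<exists>c. c \<noteq> 0 \<and> (\<forall>i. c$i \<in> \<rat>) \<and> (\<forall>v\<in>span B. c \<bullet> v = 0)"
proof -
  have finB: "finite B" using indB by (simp add: independent_imp_finite)
  obtain k0 :: 'n where True by simp
  have "card (UNIV - {k0}) = card B" using cardB by (simp add: card_Diff_singleton)
  then obtain g where g: "bij_betw g (UNIV - {k0}) B"
    using finite_same_card_bij[of "UNIV - {k0}" B] finB by auto
  define M :: "real^'n \<Rightarrow> real^'n^'n" where "M x = (\<chi> i. if i = k0 then x else g i)" for x
  define c where "c = (\<chi> j. det (M (axis j 1)))"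
  have det_M: "det (M x) = c \<bullet> x" for x
    unfolding M_def c_def by (rule det_replace_row_eq_inner)
  have "c \<bullet> d = 0" if "d \<in> B" for d
  proof -
    obtain k where k: "k \<in> UNIV - {k0}" "g k = d" using g \<open>d \<in> B\<close> by (auto simp: bij_betw_def)
    have "det (M d) = 0"
      by (rule det_identical_rows[of k0 k]) (use k in \<open>auto simp: M_def row_def\<close>)
    then show ?thesis using det_M by simp
  qed
  then have "span B \<subseteq> {x. c \<bullet> x = 0}"
    by (intro span_minimal) (auto simp: subspace_hyperplane)
  moreover have "c$j \<in> \<rat>" for j
    unfolding c_def using g rat by (auto simp: M_def axis_def bij_betw_def intro!: det_in_Rats)
  moreover have "c \<noteq> 0"
  proof -
    have "dim (span B) = CARD('n) - 1" using dim_eq_card_independent[OF indB] cardB by simp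
    moreover have "0 < CARD('n)" by simp
    ultimately have "dim (span B) \<noteq> CARD('n)" by linarith
    then have "span B \<noteq> UNIV" by (metis DIM_cart DIM_real dim_UNIV mult.right_neutral)
    then obtain x where x: "x \<notin> span B" by auto
    have "rows (M x) = insert x (g ` (UNIV - {k0}))"
      unfolding rows_def row_def M_def by auto
    then have rows: "rows (M x) = insert x B" using g by (simp add: bij_betw_def)
    have "x \<notin> B" using x span_base by blast
    have "independent (insert x B)" using indB x by (rule independent_insertI[rotated])
    moreover have "card (insert x B) = CARD('n)" using \<open>x \<notin> B\<close> finB cardB by simp
    ultimately have "rank (M x) = CARD('n)"
      unfolding row_rank_def rows by (simp add: dim_eq_card_independent)
    then have "det (M x) \<noteq> 0" by (simp add: det_eq_0_rank)
    then show ?thesis using det_M by auto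
  qed
  ultimately show ?thesis by blast
qed

lemma rational_normal_exists:
  fixes T :: "(real^'n) set"
  assumes "finite T" and rat: "\<forall>v\<in>T. \<forall>i. v$i \<in> \<rat>"
    and dimT: "aff_dim T = int CARD('n) - 1" and "w0 \<in> T"
  shows "\<exists>c. c \<noteq> 0 \<and> (\<forall>i. c$i \<in> \<rat>) \<and> (\<forall>w\<in>T. c \<bullet> w = c \<bullet> w0)"
proof -
  define D where "D = (\<lambda>w. w - w0) ` T"
  have "aff_dim T = int (dim D)"
    unfolding D_def using \<open>w0 \<in> T\<close> by (intro aff_dim_eq_dim_subtract) (simp add: hull_inc)
  then have "dim D = CARD('n) - 1" using dimT by simp
  then obtain B where "B \<subseteq> D" "independent B" "D \<subseteq> span B" "card B = CARD('n) - 1"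
    using basis_exists by metis
  moreover have "\<forall>v\<in>D. \<forall>i. v$i \<in> \<rat>" unfolding D_def using rat \<open>w0 \<in> T\<close> by auto
  ultimately obtain c where "c \<noteq> 0" "\<forall>i. c$i \<in> \<rat>" "\<forall>v\<in>span B. c \<bullet> v = 0"
    using rational_orthogonal_vector_exists[of B] by blast
  moreover have "c \<bullet> w = c \<bullet> w0" if "w \<in> T" for w
  proof -
    have "w - w0 \<in> span B" using \<open>D \<subseteq> span B\<close> that unfolding D_def by blast
    then show ?thesis using \<open>\<forall>v\<in>span B. c \<bullet> v = 0\<close> by (metis eq_iff_diff_eq_0 inner_diff_right)
  qed
  ultimately show ?thesis by blast
qed

lemma hyperplane_eq_imp_scaled:
  fixes a :: "'a::real_inner"
  assumes "a \<noteq> 0" and eq: "{x. a \<bullet> x = b} = {x. a' \<bullet> x = b'}"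
  shows "\<exists>\<mu>. a' = \<mu> *\<^sub>R a \<and> b' = \<mu> * b"
proof -
  have aa: "a \<bullet> a \<noteq> 0" using assms by simp
  define x0 where "x0 = (b / (a \<bullet> a)) *\<^sub>R a"
  define \<mu> where "\<mu> = (a \<bullet> a') / (a \<bullet> a)"
  define v where "v = a' - \<mu> *\<^sub>R a"
  have x0: "a \<bullet> x0 = b" unfolding x0_def using aa by simp
  then have x0': "a' \<bullet> x0 = b'" using eq by blast
  have av: "a \<bullet> v = 0" unfolding v_def \<mu>_def using aa by (simp add: inner_diff_right)
  then have "a \<bullet> (x0 + v) = b" using x0 by (simp add: inner_add_right)
  then have "a' \<bullet> (x0 + v) = b'" using eq by blast
  then have "a' \<bullet> v = 0" using x0' by (simp add: inner_add_right)
  then have "v \<bullet> v = 0" using av unfolding v_def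
    by (simp add: inner_diff_left inner_diff_right inner_commute)
  then have "a' = \<mu> *\<^sub>R a" unfolding v_def by simp
  moreover have "b' = \<mu> * b" using x0 x0' calculation by simp
  ultimately show ?thesis by blast
qed

lemma affine_hull_facet_eq_hyperplane:
  fixes S :: "'a::euclidean_space set"
  assumes "aff_dim S = DIM('a)" and "F facet_of S" and "c \<noteq> 0" and sub: "F \<subseteq> {x. c \<bullet> x = d}"
  shows "affine hull F = {x. c \<bullet> x = d}"
proof -
  have "aff_dim F = aff_dim {x. c \<bullet> x = d}" using assms by (simp add: facet_of_def)
  then have "affine hull F = affine hull {x. c \<bullet> x = d}"
    by (rule aff_dim_eq_full_gen[OF sub, THEN iffD1])
  also have "\<dots> = {x. c \<bullet> x = d}" by (rule affine_hull_eq[THEN iffD2, OF affine_hyperplane])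
  finally show ?thesis .
qed

lemma facet_supporting_halfspace_unique:
  fixes S :: "'a::euclidean_space set"
  assumes full: "aff_dim S = DIM('a)" and F: "F facet_of S" and a: "a \<noteq> 0" and a': "a' \<noteq> 0"
    and valid: "\<forall>x\<in>S. b \<le> a \<bullet> x" and valid': "\<forall>x\<in>S. b' \<le> a' \<bullet> x"
    and F_eq: "F = {x\<in>S. a \<bullet> x = b}" and F_eq': "F = {x\<in>S. a' \<bullet> x = b'}"
  shows "\<exists>\<mu>>0. a' = \<mu> *\<^sub>R a \<and> b' = \<mu> * b"
proof -
  have "affine hull F = {x. a \<bullet> x = b}" "affine hull F = {x. a' \<bullet> x = b'}"
    by (rule affine_hull_facet_eq_hyperplane[OF full F]; use a a' F_eq F_eq' in blast)+
  then obtain \<mu> where \<mu>: "a' = \<mu> *\<^sub>R a" "b' = \<mu> * b"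
    using hyperplane_eq_imp_scaled[OF a, of b a' b'] by auto
  have "\<not> S \<subseteq> {x. a \<bullet> x = b}"
  proof
    assume "S \<subseteq> {x. a \<bullet> x = b}"
    then have "aff_dim S \<le> aff_dim {x. a \<bullet> x = b}" by (rule aff_dim_subset)
    then show False using full a by simp
  qed
  then obtain x where "x \<in> S" "b < a \<bullet> x" using valid by force
  moreover have "\<mu> * b \<le> \<mu> * (a \<bullet> x)" using valid' \<open>x \<in> S\<close> \<mu> by simp
  ultimately have "\<mu> \<ge> 0" by (smt (verit) mult_le_cancel_left)
  moreover have "\<mu> \<noteq> 0" using \<mu> a' by auto
  ultimately have "\<mu> > 0" by simp
  then show ?thesis using \<mu> by blast
qed

lemma facet_of_subset_eq:
  assumes "F facet_of S" and "G facet_of S" and "G \<subseteq> F"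
  shows "G = F"
proof (rule ccontr)
  assume "G \<noteq> F"
  have "G face_of F"
    using assms by (meson face_of_subset facet_of_imp_face_of facet_of_imp_subset)
  moreover have "convex F" using assms face_of_imp_convex facet_of_imp_face_of by blast
  ultimately have "aff_dim G < aff_dim F" using \<open>G \<noteq> F\<close> face_of_aff_dim_lt by blast
  then show False using assms by (simp add: facet_of_def)
qed

text \<open>Pass to an irredundant subfamily, to which \<open>facet_of_polyhedron_explicit\<close> applies.\<close>
lemma facet_of_Inter_halfspaces:
  fixes S :: "'a::euclidean_space set"
  assumes "finite K" and S_eq: "S = (\<Inter>k\<in>K. {x. A k \<bullet> x \<le> B k})"
    and nz: "\<And>k. k \<in> K \<Longrightarrow> A k \<noteq> 0" and C: "C facet_of S"
  shows "\<exists>k\<in>K. C = S \<inter> {x. A k \<bullet> x = B k}"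
proof -
  define H where "H k = {x. A k \<bullet> x \<le> B k}" for k
  define rep where "rep G \<longleftrightarrow> G \<subseteq> H ` K \<and> S = affine hull S \<inter> \<Inter>G" for G
  have "rep (H ` K)" unfolding rep_def H_def using S_eq hull_subset[of S affine] by blast
  then obtain Fam where Fam: "rep Fam" and least: "\<And>G. rep G \<Longrightarrow> card Fam \<le> card G"
    using ex_has_least_nat[of rep "H ` K" card] by blast
  have "Fam \<subseteq> H ` K" and S_Fam: "S = affine hull S \<inter> \<Inter>Fam"
    using Fam unfolding rep_def by blast+
  then have "finite Fam" using \<open>finite K\<close> finite_subset by blast
  have irredundant: "S \<subset> affine hull S \<inter> \<Inter>G" if "G \<subset> Fam" for G
  proof -
    have "S \<subseteq> affine hull S \<inter> \<Inter>G" using S_Fam that by blast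
    moreover have "\<not> rep G"
      using least[of G] psubset_card_mono[OF \<open>finite Fam\<close> that] by linarith
    then have "S \<noteq> affine hull S \<inter> \<Inter>G"
      using that \<open>Fam \<subseteq> H ` K\<close> unfolding rep_def by blast
    ultimately show ?thesis by blast
  qed
  have "\<forall>h\<in>Fam. \<exists>k. k \<in> K \<and> h = H k" using \<open>Fam \<subseteq> H ` K\<close> by blast
  then obtain k where k: "\<And>h. h \<in> Fam \<Longrightarrow> k h \<in> K \<and> h = H (k h)"
    by metis
  have halfspaces: "A (k h) \<noteq> 0 \<and> h = {x. A (k h) \<bullet> x \<le> B (k h)}" if "h \<in> Fam" for h
    using k[OF that] nz unfolding H_def by blast
  obtain h where "h \<in> Fam" "C = S \<inter> {x. A (k h) \<bullet> x = B (k h)}"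
    using facet_of_polyhedron_explicit[OF \<open>finite Fam\<close> S_Fam halfspaces irredundant] C by blast
  then show ?thesis using k by blast
qed

lemma mem_full_polyhedron_if_facet_ineqs:
  fixes S :: "'a::euclidean_space set"
  assumes "polyhedron S" and full: "aff_dim S = DIM('a)"
    and facet_ineq: "\<And>C. C facet_of S \<Longrightarrow>
      \<exists>a b. a \<noteq> 0 \<and> (\<forall>y\<in>S. b \<le> a \<bullet> y) \<and> C = {y\<in>S. a \<bullet> y = b} \<and> b \<le> a \<bullet> x"
  shows "x \<in> S"
proof (rule ccontr)
  assume "x \<notin> S"
  obtain Fam where "finite Fam" and S_Fam: "S = affine hull S \<inter> \<Inter>Fam"
    and halfspaces: "\<And>h. h \<in> Fam \<Longrightarrow> \<exists>a b. a \<noteq> 0 \<and> h = {x. a \<bullet> x \<le> b}"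
    and irredundant: "\<And>G. G \<subset> Fam \<Longrightarrow> S \<subset> affine hull S \<inter> \<Inter>G"
    using \<open>polyhedron S\<close> by (simp add: polyhedron_Int_affine_minimal) meson
  then obtain a b where ab: "\<And>h. h \<in> Fam \<Longrightarrow> a h \<noteq> 0 \<and> h = {x. a h \<bullet> x \<le> b h}"
    by metis
  have "affine hull S = UNIV" using full aff_dim_eq_full[of S] by simp
  then obtain h where h: "h \<in> Fam" "x \<notin> h" using \<open>x \<notin> S\<close> S_Fam by blast
  define C where "C = S \<inter> {y. a h \<bullet> y = b h}"
  have "C facet_of S"
    unfolding C_def using facet_of_polyhedron_explicit[OF \<open>finite Fam\<close> S_Fam ab irredundant] h by blast
  then obtain a' b' where a'b': "a' \<noteq> 0" "\<forall>y\<in>S. b' \<le> a' \<bullet> y" "C = {y\<in>S. a' \<bullet> y = b'}" "b' \<le> a' \<bullet> x"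
    using facet_ineq by blast
  have "- a h \<noteq> 0" using ab[OF h(1)] by simp
  moreover have "S \<subseteq> h" using S_Fam h(1) by blast
  then have "\<forall>y\<in>S. - b h \<le> (- a h) \<bullet> y" using ab[OF h(1)] by auto
  moreover have "C = {y\<in>S. (- a h) \<bullet> y = - b h}" unfolding C_def by auto
  ultimately obtain \<mu> where "\<mu> > 0" "a' = \<mu> *\<^sub>R (- a h)" "b' = \<mu> * (- b h)"
    using facet_supporting_halfspace_unique[OF full \<open>C facet_of S\<close> _ a'b'(1) _ a'b'(2) _ a'b'(3)]
    by blast
  then have "a h \<bullet> x \<le> b h" using a'b'(4) by simp
  then show False using h ab by blast
qed

text \<open>Meaningful only when \<open>F\<close> has exactly one primitive facet inequality, as for facets of
  full-dimensional rational polytopes (\<open>rational_polytope_facet_ineq\<close>, \<open>facet_ineq_unique\<close>).\<close>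
definition facet_normal :: "(real^'n) set \<Rightarrow> (real^'n) set \<Rightarrow> real^'n" where
  "facet_normal Q F = fst (THE (a, b). facet_ineq Q F a b)"

definition facet_offset :: "(real^'n) set \<Rightarrow> (real^'n) set \<Rightarrow> real" where
  "facet_offset Q F = snd (THE (a, b). facet_ineq Q F a b)"

lemma facet_dist_eq_normal_offset: "facet_dist Q F x = facet_normal Q F \<bullet> x - facet_offset Q F"
  unfolding facet_dist_def facet_normal_def facet_offset_def by (simp add: split_beta Let_def)

lemma facet_dist_affine_combination:
  "facet_dist Q F ((1 - l) *\<^sub>R y + l *\<^sub>R x) = (1 - l) * facet_dist Q F y + l * facet_dist Q F x"
  unfolding facet_dist_eq_normal_offset by (simp add: inner_add_right algebra_simps)

lemma facet_ineq_unique: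
  fixes Q :: "(real^'n) set"
  assumes full: "aff_dim Q = int CARD('n)" and F: "F facet_of Q"
    and ineq: "facet_ineq Q F a b" and ineq': "facet_ineq Q F a' b'"
  shows "a' = a \<and> b' = b"
proof -
  have prim: "primitive_vec a" and valid: "\<forall>x\<in>Q. b \<le> a \<bullet> x" and F_eq: "F = {x\<in>Q. a \<bullet> x = b}"
    using ineq unfolding facet_ineq_def by blast+
  have prim': "primitive_vec a'" and valid': "\<forall>x\<in>Q. b' \<le> a' \<bullet> x"
    and F_eq': "F = {x\<in>Q. a' \<bullet> x = b'}"
    using ineq' unfolding facet_ineq_def by blast+
  have "a \<noteq> 0" "a' \<noteq> 0" using prim prim' by (auto simp: primitive_vec_def)
  moreover have "aff_dim Q = DIM(real^'n)" using full by simp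
  ultimately obtain \<mu> where "\<mu> > 0" "a' = \<mu> *\<^sub>R a" "b' = \<mu> * b"
    using facet_supporting_halfspace_unique[OF _ F _ _ valid valid' F_eq F_eq'] by blast
  moreover from this have "\<mu> = 1" using primitive_vec_scale_eq_1 prim prim' by blast
  ultimately show ?thesis by simp
qed

lemma facet_normal_offset_eq:
  fixes Q :: "(real^'n) set"
  assumes "aff_dim Q = int CARD('n)" and "F facet_of Q" and ineq: "facet_ineq Q F a b"
  shows "facet_normal Q F = a" and "facet_offset Q F = b"
proof -
  have "(THE (a, b). facet_ineq Q F a b) = (a, b)"
  proof (rule the_equality)
    fix p assume "case p of (a', b') \<Rightarrow> facet_ineq Q F a' b'"
    then have "facet_ineq Q F (fst p) (snd p)" by (simp add: split_beta)
    then show "p = (a, b)" using facet_ineq_unique[OF assms] by (simp add: prod_eq_iff)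
  qed (simp add: ineq)
  then show "facet_normal Q F = a" "facet_offset Q F = b"
    unfolding facet_normal_def facet_offset_def by auto
qed

lemma facet_dist_eq:
  fixes Q :: "(real^'n) set"
  assumes "aff_dim Q = int CARD('n)" and "F facet_of Q" and "facet_ineq Q F a b"
  shows "facet_dist Q F x = a \<bullet> x - b"
  using facet_normal_offset_eq[OF assms] by (simp add: facet_dist_eq_normal_offset)

text \<open>The facet is the convex hull of rational vertices, so its hyperplane has a rational normal;
  rescale it to a primitive vector pointing into \<open>P\<close>.\<close>
lemma rational_polytope_facet_ineq:
  fixes P :: "(real^'n) set"
  assumes "rational_polytope P" and full: "aff_dim P = int CARD('n)" and F: "F facet_of P"
  shows "\<exists>a b. facet_ineq P F a b"
proof -
  obtain V where V: "finite V" "P = convex hull V" "\<forall>v\<in>V. \<forall>i. v $ i \<in> \<rat>"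
    using assms(1) unfolding rational_polytope_def by blast
  then have "polytope P" unfolding polytope_def by blast
  then obtain a b where ab: "a \<noteq> 0" "P \<subseteq> {x. a \<bullet> x \<le> b}" "F = P \<inter> {x. a \<bullet> x = b}"
    using F facet_of_polyhedron polytope_imp_polyhedron by metis
  have "F face_of convex hull V" using F V(2) facet_of_imp_face_of by simp
  then obtain T where T: "T \<subseteq> V" "F = convex hull T"
    using face_of_convex_hull_subset[OF finite_imp_compact[OF V(1)]] by blast
  have "finite T" "\<forall>v\<in>T. \<forall>i. v $ i \<in> \<rat>" using T V finite_subset by blast+
  moreover have "aff_dim T = int CARD('n) - 1"
    using T F full by (simp add: facet_of_def aff_dim_convex_hull)
  moreover have "F \<noteq> {}" using F by (simp add: facet_of_def)
  then obtain w0 where "w0 \<in> T" using T by auto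
  ultimately obtain c where c: "c \<noteq> 0" "\<forall>i. c$i \<in> \<rat>" "\<forall>w\<in>T. c \<bullet> w = c \<bullet> w0"
    using rational_normal_exists by blast
  have full': "aff_dim P = DIM(real^'n)" using full by simp
  have "F \<subseteq> {x. c \<bullet> x = c \<bullet> w0}"
    unfolding T(2) using c(3) by (intro hull_minimal convex_hyperplane) auto
  then have "affine hull F = {x. c \<bullet> x = c \<bullet> w0}"
    by (rule affine_hull_facet_eq_hyperplane[OF full' F c(1)])
  moreover have "affine hull F = {x. a \<bullet> x = b}"
    by (rule affine_hull_facet_eq_hyperplane[OF full' F ab(1)]) (use ab(3) in blast)
  ultimately have "{x. a \<bullet> x = b} = {x. c \<bullet> x = c \<bullet> w0}" by simp
  then obtain \<nu> where "c = \<nu> *\<^sub>R a" using hyperplane_eq_imp_scaled[OF ab(1)] by blast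
  moreover obtain \<mu> where "\<mu> > 0" "primitive_vec (\<mu> *\<^sub>R c)"
    using rational_vec_scale_primitive[OF c(2,1)] by blast
  ultimately have prim: "primitive_vec ((\<mu> * \<nu>) *\<^sub>R a)" and "\<mu> * \<nu> \<noteq> 0" using c(1) by auto
  define \<kappa> where "\<kappa> = - \<bar>\<mu> * \<nu>\<bar>"
  have "\<kappa> < 0" using \<open>\<mu> * \<nu> \<noteq> 0\<close> by (simp add: \<kappa>_def)
  have "primitive_vec (\<kappa> *\<^sub>R a)"
  proof (cases "\<mu> * \<nu> < 0")
    case False
    then have "\<kappa> *\<^sub>R a = - ((\<mu> * \<nu>) *\<^sub>R a)" by (simp add: \<kappa>_def)
    then show ?thesis using prim by (simp add: primitive_vec_uminus)
  qed (simp add: \<kappa>_def prim)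
  moreover have "\<forall>x\<in>P. \<kappa> * b \<le> \<kappa> *\<^sub>R a \<bullet> x"
    using ab(2) \<open>\<kappa> < 0\<close> by (auto simp: mult_le_cancel_left_neg)
  moreover have "F = {x\<in>P. \<kappa> *\<^sub>R a \<bullet> x = \<kappa> * b}" using ab(3) \<open>\<kappa> < 0\<close> by auto
  ultimately show ?thesis unfolding facet_ineq_def by blast
qed

lemma mem_adjoint_poly: "x \<in> adjoint_poly Q s \<longleftrightarrow> s \<le> lat_dist Q x"
  unfolding adjoint_poly_def by simp

lemma le_lat_dist_iff:
  assumes "finite {F. F facet_of Q}" and "{F. F facet_of Q} \<noteq> {}"
  shows "t \<le> lat_dist Q x \<longleftrightarrow> (\<forall>F. F facet_of Q \<longrightarrow> t \<le> facet_dist Q F x)"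
  unfolding lat_dist_def using assms by (subst Min_ge_iff) auto

lemma lat_dist_le_facet_dist:
  assumes "finite {F. F facet_of Q}" and "F facet_of Q"
  shows "lat_dist Q x \<le> facet_dist Q F x"
  unfolding lat_dist_def using assms by (intro Min_le) auto

lemma facet_of_scaleR_iff:
  fixes S :: "'a::euclidean_space set"
  assumes "r \<noteq> 0"
  shows "((*\<^sub>R) r ` F) facet_of ((*\<^sub>R) r ` S) \<longleftrightarrow> F facet_of S"
proof -
  have "linear ((*\<^sub>R) r)" "inj ((*\<^sub>R) r :: 'a \<Rightarrow> 'a)"
    using assms by (auto simp: inj_on_def linear_scaleR)
  then show ?thesis
    unfolding facet_of_def by (simp add: face_of_linear_image aff_dim_injective_linear_image)
qed

lemma facets_scaleR:
  fixes S :: "'a::euclidean_space set"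
  assumes "r \<noteq> 0"
  shows "{G. G facet_of (*\<^sub>R) r ` S} = (\<lambda>F. (*\<^sub>R) r ` F) ` {F. F facet_of S}"
proof (intro set_eqI iffI)
  fix G assume G: "G \<in> {G. G facet_of (*\<^sub>R) r ` S}"
  have G_eq: "(*\<^sub>R) r ` ((*\<^sub>R) (1 / r) ` G) = G" using assms by (simp add: image_image)
  show "G \<in> (\<lambda>F. (*\<^sub>R) r ` F) ` {F. F facet_of S}"
  proof (rule image_eqI)
    show "G = (*\<^sub>R) r ` ((*\<^sub>R) (1 / r) ` G)" using G_eq by simp
    show "(*\<^sub>R) (1 / r) ` G \<in> {F. F facet_of S}"
      using G G_eq facet_of_scaleR_iff[OF assms, of "(*\<^sub>R) (1 / r) ` G" S] by simp
  qed
qed (use facet_of_scaleR_iff[OF assms] in blast)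

lemma facet_ineq_scaleR:
  assumes "facet_ineq Q F a b" and "r > 0"
  shows "facet_ineq ((*\<^sub>R) r ` Q) ((*\<^sub>R) r ` F) a (r * b)"
  using assms unfolding facet_ineq_def by (auto simp: mult_left_mono image_iff)

locale full_rational_polytope =
  fixes P :: "(real^'n) set"
  assumes rational: "rational_polytope P" and full: "aff_dim P = int CARD('n)"
begin

lemma polytope: "polytope P"
  using rational unfolding rational_polytope_def polytope_def by blast

lemma finite_facets: "finite {F. F facet_of P}"
  using polytope by (rule finite_polytope_facets)

lemma facets_nonempty: "{F. F facet_of P} \<noteq> {}"
  using polytope_facet_exists[OF polytope] full by auto

lemma facet_ineq_normal_offset:
  assumes "F facet_of P"
  shows "facet_ineq P F (facet_normal P F) (facet_offset P F)"
proof -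
  obtain a b where "facet_ineq P F a b" using rational_polytope_facet_ineq[OF rational full assms] by blast
  then show ?thesis using facet_normal_offset_eq[OF full assms] by simp
qed

lemma facet_normal_nonzero: "F facet_of P \<Longrightarrow> facet_normal P F \<noteq> 0"
  using facet_ineq_normal_offset unfolding facet_ineq_def primitive_vec_def by blast

lemma facet_dist_nonneg:
  assumes "F facet_of P" and "x \<in> P"
  shows "0 \<le> facet_dist P F x"
proof -
  have "facet_offset P F \<le> facet_normal P F \<bullet> x"
    using facet_ineq_normal_offset[OF assms(1)] assms(2) unfolding facet_ineq_def by blast
  then show ?thesis by (simp add: facet_dist_eq_normal_offset)
qed

lemma facet_eq: "F facet_of P \<Longrightarrow> F = {x\<in>P. facet_dist P F x = 0}"
  using facet_ineq_normal_offset unfolding facet_ineq_def facet_dist_eq_normal_offset by force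

lemma mem_iff_facet_dist_nonneg: "x \<in> P \<longleftrightarrow> (\<forall>F. F facet_of P \<longrightarrow> 0 \<le> facet_dist P F x)"
proof
  assume nonneg: "\<forall>F. F facet_of P \<longrightarrow> 0 \<le> facet_dist P F x"
  show "x \<in> P"
  proof (rule mem_full_polyhedron_if_facet_ineqs)
    show "polyhedron P" "aff_dim P = DIM(real^'n)"
      using polytope_imp_polyhedron[OF polytope] full by simp_all
    fix C assume C: "C facet_of P"
    then have "facet_offset P C \<le> facet_normal P C \<bullet> x"
      using nonneg by (simp add: facet_dist_eq_normal_offset)
    then show "\<exists>a b. a \<noteq> 0 \<and> (\<forall>y\<in>P. b \<le> a \<bullet> y) \<and> C = {y\<in>P. a \<bullet> y = b} \<and> b \<le> a \<bullet> x"
      using facet_ineq_normal_offset[OF C] facet_normal_nonzero[OF C]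
      unfolding facet_ineq_def by blast
  qed
qed (use facet_dist_nonneg in blast)

lemma mem_adjoint_poly_iff:
  "x \<in> adjoint_poly P s \<longleftrightarrow> (\<forall>F. F facet_of P \<longrightarrow> s \<le> facet_dist P F x)"
  unfolding adjoint_poly_def using le_lat_dist_iff[OF finite_facets facets_nonempty] by simp

lemma adjoint_poly_0: "adjoint_poly P 0 = P"
  using mem_adjoint_poly_iff mem_iff_facet_dist_nonneg by auto

lemma adjoint_poly_subset: "0 \<le> s \<Longrightarrow> adjoint_poly P s \<subseteq> P"
  using mem_adjoint_poly_iff mem_iff_facet_dist_nonneg by force

lemma adjoint_poly_eq_Inter_halfspaces:
  "adjoint_poly P s =
     (\<Inter>F\<in>{F. F facet_of P}. {x. (- facet_normal P F) \<bullet> x \<le> - (facet_offset P F + s)})"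
  unfolding set_eq_iff mem_adjoint_poly_iff facet_dist_eq_normal_offset by auto

lemma polyhedron_adjoint_poly: "polyhedron (adjoint_poly P s)"
proof -
  have "polyhedron {x. (- facet_normal P F) \<bullet> x \<le> - (facet_offset P F + s)}" for F
    by (rule polyhedron_halfspace_le)
  then show ?thesis
    unfolding adjoint_poly_eq_Inter_halfspaces
    by (intro polyhedron_Inter) (use finite_facets in blast)+
qed

lemma facet_of_adjoint_poly:
  assumes "G facet_of adjoint_poly P s"
  shows "\<exists>F. F facet_of P \<and> G = adj_facet P F s"
proof -
  obtain F where "F facet_of P"
    "G = adjoint_poly P s \<inter> {x. (- facet_normal P F) \<bullet> x = - (facet_offset P F + s)}"
    using facet_of_Inter_halfspaces[OF finite_facets adjoint_poly_eq_Inter_halfspaces _ assms]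
      facet_normal_nonzero by auto
  then show ?thesis
    unfolding adj_facet_def facet_dist_eq_normal_offset by auto
qed

lemma facet_ineq_adj_facet:
  assumes "F facet_of P"
  shows "facet_ineq (adjoint_poly P s) (adj_facet P F s) (facet_normal P F) (facet_offset P F + s)"
proof -
  have "\<forall>x\<in>adjoint_poly P s. facet_offset P F + s \<le> facet_normal P F \<bullet> x"
  proof
    fix x assume "x \<in> adjoint_poly P s"
    then have "s \<le> facet_dist P F x" using assms mem_adjoint_poly_iff by blast
    then show "facet_offset P F + s \<le> facet_normal P F \<bullet> x"
      by (simp add: facet_dist_eq_normal_offset)
  qed
  moreover have "adj_facet P F s = {x\<in>adjoint_poly P s. facet_normal P F \<bullet> x = facet_offset P F + s}"
    unfolding adj_facet_def facet_dist_eq_normal_offset by auto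
  moreover have "primitive_vec (facet_normal P F)"
    using facet_ineq_normal_offset[OF assms] unfolding facet_ineq_def by blast
  ultimately show ?thesis unfolding facet_ineq_def by blast
qed

lemma adj_facet_0: "F facet_of P \<Longrightarrow> adj_facet P F 0 = F"
  unfolding adj_facet_def adjoint_poly_0 using facet_eq by auto

lemma lat_dist_scaleR:
  assumes "r > 0"
  shows "lat_dist ((*\<^sub>R) r ` P) (r *\<^sub>R x) = r * lat_dist P x"
proof -
  let ?rP = "(*\<^sub>R) r ` P"
  have "aff_dim ?rP = int CARD('n)"
    using full assms by (simp add: aff_dim_injective_linear_image inj_on_def linear_scaleR)
  note full_scaled = this
  have facet_iff: "(*\<^sub>R) r ` F facet_of ?rP \<longleftrightarrow> F facet_of P" for F
    using facet_of_scaleR_iff[of r F P] assms by simp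
  have facet_dist_scaleR:
    "facet_dist ?rP ((*\<^sub>R) r ` F) (r *\<^sub>R x) = r * facet_dist P F x" if F: "F facet_of P" for F
  proof -
    have "facet_dist ?rP ((*\<^sub>R) r ` F) (r *\<^sub>R x) = facet_normal P F \<bullet> (r *\<^sub>R x) - r * facet_offset P F"
      using F facet_iff
      by (intro facet_dist_eq[OF full_scaled _ facet_ineq_scaleR[OF facet_ineq_normal_offset[OF F] assms]]) simp
    then show ?thesis by (simp add: facet_dist_eq_normal_offset algebra_simps)
  qed
  have facets_scaled: "{G. G facet_of ?rP} = (\<lambda>F. (*\<^sub>R) r ` F) ` {F. F facet_of P}"
    using facets_scaleR[of r P] assms by simp
  have "lat_dist ?rP (r *\<^sub>R x) = Min ((\<lambda>F. facet_dist ?rP ((*\<^sub>R) r ` F) (r *\<^sub>R x)) ` {F. F facet_of P})"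
    unfolding lat_dist_def facets_scaled image_image ..
  also have "\<dots> = Min ((\<lambda>F. r * facet_dist P F x) ` {F. F facet_of P})"
    using facet_dist_scaleR by (intro arg_cong[where f = Min] image_cong) auto
  also have "\<dots> = r * lat_dist P x"
  proof -
    have "mono ((*) r)" using assms by (auto simp: mono_def intro!: mult_left_mono)
    then have "r * lat_dist P x = Min ((*) r ` (\<lambda>F. facet_dist P F x) ` {F. F facet_of P})"
      unfolding lat_dist_def using finite_facets facets_nonempty by (intro mono_Min_commute) auto
    then show ?thesis by (simp add: image_image)
  qed
  finally show ?thesis .
qed

lemma adjoint_poly_scaleR:
  assumes "r > 0"
  shows "(*\<^sub>R) r ` adjoint_poly P s = adjoint_poly ((*\<^sub>R) r ` P) (r * s)"
proof (intro set_eqI)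
  fix y :: "real^'n"
  have y_eq: "y = r *\<^sub>R ((1 / r) *\<^sub>R y)" using assms by simp
  have "y \<in> (*\<^sub>R) r ` adjoint_poly P s \<longleftrightarrow> (1 / r) *\<^sub>R y \<in> adjoint_poly P s"
  proof
    assume "(1 / r) *\<^sub>R y \<in> adjoint_poly P s"
    then show "y \<in> (*\<^sub>R) r ` adjoint_poly P s" by (rule image_eqI[where f = "(*\<^sub>R) r", OF y_eq])
  qed (use assms in auto)
  also have "\<dots> \<longleftrightarrow> r * s \<le> r * lat_dist P ((1 / r) *\<^sub>R y)"
    using assms by (simp add: adjoint_poly_def)
  also have "r * lat_dist P ((1 / r) *\<^sub>R y) = lat_dist ((*\<^sub>R) r ` P) y"
    using lat_dist_scaleR[OF assms, of "(1 / r) *\<^sub>R y"] assms by simp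
  finally show "y \<in> (*\<^sub>R) r ` adjoint_poly P s \<longleftrightarrow> y \<in> adjoint_poly ((*\<^sub>R) r ` P) (r * s)"
    by (simp add: adjoint_poly_def)
qed

end

locale adjoint_full_polytope = full_rational_polytope P for P :: "(real^'n) set" +
  fixes s :: real
  assumes s_nonneg: "0 \<le> s" and adjoint_full: "aff_dim (adjoint_poly P s) = int CARD('n)"
begin

abbreviation Q :: "(real^'n) set" where "Q \<equiv> adjoint_poly P s"

definition surviving_facets :: "(real^'n) set set" where
  "surviving_facets = {F. F facet_of P \<and> adj_facet P F s facet_of Q}"

lemma s_pos_if_not_surviving:
  assumes "G facet_of P" and "G \<notin> surviving_facets"
  shows "0 < s"
proof -
  have "s \<noteq> 0"
    using assms adj_facet_0 adjoint_poly_0 unfolding surviving_facets_def by auto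
  then show ?thesis using s_nonneg by simp
qed

lemma finite_surviving_facets: "finite surviving_facets"
  using finite_facets unfolding surviving_facets_def by (rule finite_subset[rotated]) blast

lemma facet_dist_adj_facet:
  assumes "F \<in> surviving_facets"
  shows "facet_dist Q (adj_facet P F s) x = facet_dist P F x - s"
proof -
  have "F facet_of P" "adj_facet P F s facet_of Q" using assms unfolding surviving_facets_def by blast+
  then show ?thesis
    using facet_dist_eq[OF adjoint_full _ facet_ineq_adj_facet] by (simp add: facet_dist_eq_normal_offset)
qed

lemma facet_of_adjoint_poly_iff: "G facet_of Q \<longleftrightarrow> (\<exists>F\<in>surviving_facets. G = adj_facet P F s)"
  using facet_of_adjoint_poly unfolding surviving_facets_def by blast

lemma mem_adjoint_poly_iff_surviving: "x \<in> Q \<longleftrightarrow> (\<forall>F\<in>surviving_facets. s \<le> facet_dist P F x)"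
proof
  assume surv: "\<forall>F\<in>surviving_facets. s \<le> facet_dist P F x"
  show "x \<in> Q"
  proof (rule mem_full_polyhedron_if_facet_ineqs)
    show "polyhedron Q" "aff_dim Q = DIM(real^'n)"
      using polyhedron_adjoint_poly adjoint_full by simp_all
    fix C assume "C facet_of Q"
    then obtain F where F: "F \<in> surviving_facets" "C = adj_facet P F s"
      using facet_of_adjoint_poly_iff by blast
    then have "F facet_of P" unfolding surviving_facets_def by blast
    have "s \<le> facet_dist P F x" using surv F(1) by blast
    then have "facet_offset P F + s \<le> facet_normal P F \<bullet> x"
      by (simp add: facet_dist_eq_normal_offset)
    then show "\<exists>a b. a \<noteq> 0 \<and> (\<forall>y\<in>Q. b \<le> a \<bullet> y) \<and> C = {y\<in>Q. a \<bullet> y = b} \<and> b \<le> a \<bullet> x"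
      using facet_ineq_adj_facet[OF \<open>F facet_of P\<close>] facet_normal_nonzero[OF \<open>F facet_of P\<close>] F(2)
      unfolding facet_ineq_def by blast
  qed
qed (auto simp: mem_adjoint_poly_iff surviving_facets_def)

lemma surviving_facets_nonempty: "surviving_facets \<noteq> {}"
proof
  assume "surviving_facets = {}"
  then have "Q = UNIV" using mem_adjoint_poly_iff_surviving by auto
  moreover have "Q \<subseteq> P" using adjoint_poly_subset s_nonneg by simp
  then have "bounded Q" using polytope_imp_bounded[OF polytope] bounded_subset by blast
  ultimately show False by simp
qed

lemma le_lat_dist_adjoint_iff:
  "t \<le> lat_dist Q x \<longleftrightarrow> (\<forall>F\<in>surviving_facets. t + s \<le> facet_dist P F x)"
proof -
  have "finite {G. G facet_of Q}" "{G. G facet_of Q} \<noteq> {}"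
    using finite_surviving_facets surviving_facets_nonempty
    unfolding facet_of_adjoint_poly_iff by (auto simp: setcompr_eq_image)
  then have "t \<le> lat_dist Q x \<longleftrightarrow> (\<forall>G. G facet_of Q \<longrightarrow> t \<le> facet_dist Q G x)"
    by (rule le_lat_dist_iff)
  also have "\<dots> \<longleftrightarrow> (\<forall>F\<in>surviving_facets. t + s \<le> facet_dist P F x)"
    unfolding facet_of_adjoint_poly_iff using facet_dist_adj_facet by auto
  finally show ?thesis .
qed

lemma segment_from_facet_lower_bound:
  assumes "y \<in> G" and "G facet_of P"
    and surv: "\<forall>F\<in>surviving_facets. s \<le> (1 - l) * facet_dist P F y + l * facet_dist P F x"
  shows "s \<le> l * facet_dist P G x"
proof -
  have "(1 - l) *\<^sub>R y + l *\<^sub>R x \<in> Q"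
    unfolding mem_adjoint_poly_iff_surviving facet_dist_affine_combination using surv by blast
  then have "s \<le> facet_dist P G ((1 - l) *\<^sub>R y + l *\<^sub>R x)"
    using \<open>G facet_of P\<close> mem_adjoint_poly_iff by blast
  moreover have "facet_dist P G y = 0" using facet_eq[OF \<open>G facet_of P\<close>] \<open>y \<in> G\<close> by blast
  ultimately show ?thesis unfolding facet_dist_affine_combination by simp
qed

text \<open>If all surviving facets were farther from \<open>x\<close> than \<open>G\<close>, walk from a point of \<open>G\<close> towards
  \<open>x\<close>: since only surviving facets constrain \<open>Q\<close>, the walk enters \<open>Q\<close> while still closer
  than \<open>s\<close> to \<open>G\<close>.\<close>
lemma surviving_facet_le:
  assumes x: "x \<in> Q" and G: "G facet_of P"
  obtains F where "F \<in> surviving_facets" and "facet_dist P F x \<le> facet_dist P G x"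
proof -
  define t where "t = Min ((\<lambda>F. facet_dist P F x) ` surviving_facets)"
  have "t \<in> (\<lambda>F. facet_dist P F x) ` surviving_facets"
    unfolding t_def using finite_surviving_facets surviving_facets_nonempty by (intro Min_in) auto
  then obtain F where F: "F \<in> surviving_facets" "facet_dist P F x = t" by blast
  have t_le: "t \<le> facet_dist P F' x" if "F' \<in> surviving_facets" for F'
    unfolding t_def using finite_surviving_facets that by (intro Min_le) auto
  have "t \<le> facet_dist P G x"
  proof (rule ccontr)
    assume less: "\<not> t \<le> facet_dist P G x"
    have "s \<le> facet_dist P G x" using x G mem_adjoint_poly_iff by blast
    moreover have "G \<notin> surviving_facets" using less t_le by force
    then have "0 < s" using G s_pos_if_not_surviving by blast
    ultimately have "0 < t" using less by linarith
    obtain y where "y \<in> G" using G by (auto simp: facet_of_def)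
    then have "y \<in> P" using G facet_of_imp_subset by blast
    have "s \<le> (1 - s / t) * facet_dist P F' y + (s / t) * facet_dist P F' x"
      if F': "F' \<in> surviving_facets" for F'
    proof -
      have "0 \<le> facet_dist P F' y" using F' \<open>y \<in> P\<close> facet_dist_nonneg unfolding surviving_facets_def by blast
      moreover have "s / t \<le> 1" using \<open>0 < t\<close> \<open>s \<le> facet_dist P G x\<close> less by simp
      moreover have "s = (s / t) * t" using \<open>0 < t\<close> by simp
      moreover have "(s / t) * t \<le> (s / t) * facet_dist P F' x"
        using t_le[OF F'] \<open>0 < t\<close> \<open>0 < s\<close> by (intro mult_left_mono) auto
      ultimately show ?thesis by (smt (verit) mult_nonneg_nonneg)
    qed
    then have "s \<le> (s / t) * facet_dist P G x" using segment_from_facet_lower_bound[OF \<open>y \<in> G\<close> G] by blast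
    also have "\<dots> < (s / t) * t" using less \<open>0 < t\<close> \<open>0 < s\<close> by (intro mult_strict_left_mono) auto
    finally show False using \<open>0 < t\<close> by simp
  qed
  then show thesis using F that by auto
qed

lemma facet_dist_gt_of_interior:
  assumes x: "x \<in> interior Q" and F: "F facet_of P"
  shows "s < facet_dist P F x"
proof -
  obtain e where "e > 0" "ball x e \<subseteq> Q" using x mem_interior by blast
  define a where "a = facet_normal P F"
  have a: "a \<noteq> 0" unfolding a_def using facet_normal_nonzero[OF F] .
  have fd: "facet_dist P F y = a \<bullet> y - facet_offset P F" for y
    unfolding a_def facet_dist_eq_normal_offset ..
  define z where "z = x - ((e / 2) / norm a) *\<^sub>R a"
  have "dist x z = e / 2" unfolding z_def dist_norm using a \<open>e > 0\<close> by simp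
  then have "z \<in> Q" using \<open>e > 0\<close> \<open>ball x e \<subseteq> Q\<close> by auto
  then have "s \<le> facet_dist P F z" using F mem_adjoint_poly_iff by blast
  moreover have "a \<bullet> z = a \<bullet> x - (e / 2) * norm a"
    unfolding z_def using a by (simp add: inner_diff_right dot_square_norm power2_eq_square)
  moreover have "0 < (e / 2) * norm a" using a \<open>e > 0\<close> by simp
  ultimately show ?thesis unfolding fd by linarith
qed

lemma surviving_facet_dist_pos_on_rel_interior:
  assumes y: "y \<in> rel_interior G" and G: "G facet_of P" "G \<notin> surviving_facets"
  obtains \<epsilon> where "0 < \<epsilon>" and "\<And>F. F \<in> surviving_facets \<Longrightarrow> \<epsilon> \<le> facet_dist P F y"
proof -
  have "y \<in> G" "y \<in> P" using y rel_interior_subset facet_of_imp_subset G(1) by blast+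
  have pos: "0 < facet_dist P F y" if F: "F \<in> surviving_facets" for F
  proof -
    have "F facet_of P" "F \<noteq> G" using F G(2) unfolding surviving_facets_def by blast+
    have "y \<notin> F"
    proof
      assume "y \<in> F"
      have "(F \<inter> G) face_of P"
        using \<open>F facet_of P\<close> G(1) face_of_Int facet_of_imp_face_of by blast
      then have "(F \<inter> G) face_of G" using face_of_subset facet_of_imp_subset[OF G(1)] by blast
      moreover have "(F \<inter> G) \<inter> rel_interior G \<noteq> {}" using y \<open>y \<in> F\<close> \<open>y \<in> G\<close> by blast
      ultimately have "F \<inter> G = G" using face_of_disjoint_rel_interior by blast
      then show False using facet_of_subset_eq[OF \<open>F facet_of P\<close> G(1)] \<open>F \<noteq> G\<close> by blast
    qed
    then have "facet_dist P F y \<noteq> 0" using facet_eq[OF \<open>F facet_of P\<close>] \<open>y \<in> P\<close> by blast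
    then show ?thesis using facet_dist_nonneg[OF \<open>F facet_of P\<close> \<open>y \<in> P\<close>] by linarith
  qed
  define \<epsilon> where "\<epsilon> = Min ((\<lambda>F. facet_dist P F y) ` surviving_facets)"
  have "\<epsilon> \<in> (\<lambda>F. facet_dist P F y) ` surviving_facets"
    unfolding \<epsilon>_def using finite_surviving_facets surviving_facets_nonempty by (intro Min_in) auto
  then have "0 < \<epsilon>" using pos by blast
  moreover have "\<epsilon> \<le> facet_dist P F y" if "F \<in> surviving_facets" for F
    unfolding \<epsilon>_def using finite_surviving_facets that by (intro Min_le) auto
  ultimately show thesis using that by blast
qed

text \<open>As for \<open>surviving_facet_le\<close>, now walking from a relative interior point of \<open>G\<close>: its positive
  distance to the surviving facets lets the walk enter \<open>Q\<close> strictly before its distance to \<open>G\<close>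
  reaches \<open>s\<close>.\<close>
lemma surviving_facet_less:
  assumes x: "x \<in> interior Q" and G: "G facet_of P" "G \<notin> surviving_facets"
  obtains F where "F \<in> surviving_facets" and "facet_dist P F x < facet_dist P G x"
proof -
  have "\<exists>F\<in>surviving_facets. facet_dist P F x < facet_dist P G x"
  proof (rule ccontr)
    assume "\<not> (\<exists>F\<in>surviving_facets. facet_dist P F x < facet_dist P G x)"
    then have le: "facet_dist P G x \<le> facet_dist P F x" if "F \<in> surviving_facets" for F
      using that by (meson not_less)
    have "0 < s" using G by (rule s_pos_if_not_surviving)
    define u where "u = facet_dist P G x"
    have "s < u" unfolding u_def by (rule facet_dist_gt_of_interior[OF x G(1)])
    have "convex G" using G(1) face_of_imp_convex facet_of_imp_face_of by blast
    moreover have "G \<noteq> {}" using G(1) by (simp add: facet_of_def)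
    ultimately obtain y where y: "y \<in> rel_interior G" using rel_interior_eq_empty by blast
    obtain \<epsilon> where "0 < \<epsilon>" and \<epsilon>_le: "\<And>F. F \<in> surviving_facets \<Longrightarrow> \<epsilon> \<le> facet_dist P F y"
      using surviving_facet_dist_pos_on_rel_interior[OF y G] by blast
    define \<eta> where "\<eta> = min s ((u - s) / u * \<epsilon>)"
    define l where "l = (s - \<eta>) / u"
    have "0 < \<eta>" unfolding \<eta>_def using \<open>0 < s\<close> \<open>s < u\<close> \<open>0 < \<epsilon>\<close> by auto
    have "0 \<le> l" unfolding l_def \<eta>_def using \<open>0 < s\<close> \<open>s < u\<close> by auto
    have lu: "l * u = s - \<eta>" unfolding l_def using \<open>0 < s\<close> \<open>s < u\<close> by simp
    have ratio: "(u - s) / u \<le> 1 - l"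
      unfolding l_def using \<open>0 < s\<close> \<open>s < u\<close> \<open>0 < \<eta>\<close> by (simp add: divide_simps)
    have "0 < (u - s) / u" using \<open>0 < s\<close> \<open>s < u\<close> by simp
    then have "0 \<le> 1 - l" using ratio by linarith
    have "\<eta> \<le> (1 - l) * \<epsilon>"
      using mult_right_mono[OF ratio, of \<epsilon>] \<open>0 < \<epsilon>\<close> unfolding \<eta>_def by linarith
    have "s \<le> (1 - l) * facet_dist P F y + l * facet_dist P F x" if F: "F \<in> surviving_facets" for F
    proof -
      have "(1 - l) * \<epsilon> \<le> (1 - l) * facet_dist P F y"
        using \<epsilon>_le[OF F] \<open>0 \<le> 1 - l\<close> by (rule mult_left_mono)
      moreover have "l * u \<le> l * facet_dist P F x"
        using le[OF F] \<open>0 \<le> l\<close> unfolding u_def by (rule mult_left_mono)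
      ultimately show ?thesis using \<open>\<eta> \<le> (1 - l) * \<epsilon>\<close> lu by linarith
    qed
    then have "s \<le> l * u" unfolding u_def using segment_from_facet_lower_bound[OF _ G(1)] y rel_interior_subset by blast
    then show False using lu \<open>0 < \<eta>\<close> by simp
  qed
  then show thesis using that by blast
qed

lemma lat_dist_adjoint_poly:
  assumes "x \<in> Q"
  shows "lat_dist Q x = lat_dist P x - s"
proof -
  have "t \<le> lat_dist Q x \<longleftrightarrow> t \<le> lat_dist P x - s" for t
  proof -
    have "(\<forall>F\<in>surviving_facets. t + s \<le> facet_dist P F x) \<longleftrightarrow>
        (\<forall>G. G facet_of P \<longrightarrow> t + s \<le> facet_dist P G x)"
    proof
      assume surv: "\<forall>F\<in>surviving_facets. t + s \<le> facet_dist P F x"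
      show "\<forall>G. G facet_of P \<longrightarrow> t + s \<le> facet_dist P G x"
      proof (intro allI impI)
        fix G assume "G facet_of P"
        then obtain F where "F \<in> surviving_facets" "facet_dist P F x \<le> facet_dist P G x"
          using surviving_facet_le[OF assms] by blast
        then show "t + s \<le> facet_dist P G x" using surv by force
      qed
    qed (simp add: surviving_facets_def)
    then show ?thesis
      unfolding le_lat_dist_adjoint_iff le_lat_dist_iff[OF finite_facets facets_nonempty, symmetric]
      by linarith
  qed
  then show ?thesis by (meson order.antisym order.refl)
qed

lemma nearest_facet_survives:
  assumes x: "x \<in> interior Q" and F: "F facet_of P" and nearest: "lat_dist P x = facet_dist P F x"
  shows "F \<in> surviving_facets"
proof (rule ccontr)
  assume "F \<notin> surviving_facets"
  then obtain F' where "F' \<in> surviving_facets" "facet_dist P F' x < facet_dist P F x"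
    using surviving_facet_less[OF x F] by blast
  moreover have "lat_dist P x \<le> facet_dist P F' x"
    using calculation(1) lat_dist_le_facet_dist[OF finite_facets] unfolding surviving_facets_def by blast
  ultimately show False using nearest by simp
qed

lemma adj_facet_of_nearest_facet:
  assumes x: "x \<in> interior Q" and F: "F facet_of P" and nearest: "lat_dist P x = facet_dist P F x"
  shows "adj_facet P F s facet_of Q \<and> lat_dist Q x = facet_dist Q (adj_facet P F s) x"
proof -
  have "F \<in> surviving_facets" using nearest_facet_survives[OF assms] .
  moreover have "lat_dist Q x = lat_dist P x - s" using x interior_subset lat_dist_adjoint_poly by blast
  ultimately show ?thesis using nearest facet_dist_adj_facet unfolding surviving_facets_def by auto
qed

lemma adjoint_poly_adjoint_poly:
  assumes "0 \<le> r"
  shows "adjoint_poly Q r = adjoint_poly P (s + r)"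
proof (intro set_eqI)
  fix x
  show "x \<in> adjoint_poly Q r \<longleftrightarrow> x \<in> adjoint_poly P (s + r)"
  proof (cases "x \<in> Q")
    case True
    then show ?thesis by (simp add: mem_adjoint_poly lat_dist_adjoint_poly le_diff_eq add.commute)
  next
    case False
    have "\<not> r \<le> lat_dist Q x"
    proof
      assume "r \<le> lat_dist Q x"
      then have "s \<le> facet_dist P F x" if "F \<in> surviving_facets" for F
        using that assms unfolding le_lat_dist_adjoint_iff by force
      then show False using False mem_adjoint_poly_iff_surviving by blast
    qed
    moreover have "\<not> s + r \<le> lat_dist P x"
      using False assms by (auto simp: mem_adjoint_poly)
    ultimately show ?thesis by (simp add: mem_adjoint_poly)
  qed
qed

end

theorem proposition1p4:
  fixes P :: "(real ^ 'n) set" and s :: real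
  assumes "rational_polytope P" and "aff_dim P = int CARD('n)" and "s \<ge> 0"
  shows "(\<forall>G. G facet_of adjoint_poly P s \<longrightarrow> (\<exists>F. F facet_of P \<and> G = adj_facet P F s))
     \<and> (aff_dim (adjoint_poly P s) = int CARD('n) \<longrightarrow>
          (\<forall>x\<in>adjoint_poly P s. lat_dist (adjoint_poly P s) x = lat_dist P x - s)
        \<and> (\<forall>x\<in>interior (adjoint_poly P s). \<forall>F. F facet_of P \<and> lat_dist P x = facet_dist P F x \<longrightarrow>
              adj_facet P F s facet_of adjoint_poly P s
            \<and> lat_dist (adjoint_poly P s) x = facet_dist (adjoint_poly P s) (adj_facet P F s) x))
     \<and> (aff_dim (adjoint_poly P s) = int CARD('n) \<longrightarrow>
          (\<forall>r\<ge>0. adjoint_poly (adjoint_poly P s) r = adjoint_poly P (s + r)))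
     \<and> (\<forall>r>0. (\<lambda>x. r *\<^sub>R x) ` adjoint_poly P s = adjoint_poly ((\<lambda>x. r *\<^sub>R x) ` P) (r * s))"
proof -
  interpret full_rational_polytope P using assms(1,2) by unfold_locales
  have adjoint: "adjoint_full_polytope P s" if "aff_dim (adjoint_poly P s) = int CARD('n)"
    by unfold_locales (use assms that in auto)
  show ?thesis
    using facet_of_adjoint_poly adjoint_poly_scaleR
      adjoint_full_polytope.lat_dist_adjoint_poly[OF adjoint]
      adjoint_full_polytope.adj_facet_of_nearest_facet[OF adjoint]
      adjoint_full_polytope.adjoint_poly_adjoint_poly[OF adjoint]
    by auto
qed

end
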